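(* Let $m\geq 2$ and let $f=a_0+a_1z+\cdots+a_mz^m\in\mathbb{Z}[z]$ be a primitive polynomial with $a_0a_m\neq 0$ such that $$|a_{m-1}|>1+|a_0||a_m|^{m-1}+|a_1||a_m|^{m-2}+\cdots+|a_{m-2}||a_m|.$$ Then $f$ is irreducible in $\mathbb{Z}[z]$.
   Context: A polynomial in $\mathbb{Z}[z]$ is primitive if the greatest common divisor of its coefficients is $1$. *)

theory Defs
  imports "HOL-Computational_Algebra.Computational_Algebra"
begin

end

theory Submission
  imports Defs "HOL-Complex_Analysis.Complex_Analysis"
begin

text \<open>
  On the circle \<open>|z| = 1 / |a_m|\<close> the term \<open>a_(m-1) z^(m-1)\<close> dominates the sum of all
  other terms of \<open>f\<close>, so by Rouche's theorem \<open>f\<close> has \<open>m - 1\<close> roots (with multiplicity)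
  in the open disc of radius \<open>1 / |a_m|\<close> and hence a single root outside it. On the other
  hand, an integer polynomial \<open>g\<close> of positive degree with \<open>g(0) \<noteq> 0\<close> has a root of modulus
  at least \<open>1 / |lc g|\<close>, because the product of its roots has modulus \<open>|g(0)| / |lc g|\<close> and
  \<open>|g(0)| \<ge> 1\<close>. Since \<open>f\<close> is primitive, both factors of a nontrivial factorisation
  \<open>f = g h\<close> have positive degree, and \<open>|lc g|, |lc h| \<le> |a_m|\<close>, so \<open>f\<close> would have two
  roots outside the disc.
\<close>

(* HOL-Analysis also defines a measure-theoretic content. *)
hide_const (open) Henstock_Kurzweil_Integration.content

lemma zorder_poly:
  fixes P :: "complex poly"
  assumes "P \<noteq> 0"
  shows "zorder (poly P) z = int (order z P)"
proof -
  obtain q where q: "P = [:-z,1:] ^ order z P * q" "\<not> [:-z,1:] dvd q"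
    using order_decomp[OF assms] by blast
  have "poly q z \<noteq> 0" using q(2) by (simp add: poly_eq_0_iff_dvd)
  show ?thesis
  proof (rule zorder_eqI[where S=UNIV and g="poly q"])
    show "poly q holomorphic_on UNIV" by (intro holomorphic_intros)
    show "poly q z \<noteq> 0" by fact
    fix w show "poly P w = poly q w * (w - z) powi int (order z P)"
      by (subst q(1)) (simp add: mult.commute)
  qed auto
qed

lemma sum_winding_number_circlepath_poly:
  fixes P :: "complex poly" and r :: real
  assumes "P \<noteq> 0" "r > 0" and no_root_on_circle: "\<And>z. norm z = r \<Longrightarrow> poly P z \<noteq> 0"
  shows "(\<Sum>p\<in>{p. poly P p = 0}. winding_number (circlepath 0 r) p * of_int (zorder (poly P) p))
           = of_nat (size {#x \<in># proots P. norm x < r#})"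
proof -
  have fin: "finite {p. poly P p = 0}" using poly_roots_finite[OF assms(1)] .
  have "(\<Sum>p\<in>{p. poly P p = 0}. winding_number (circlepath 0 r) p * of_int (zorder (poly P) p))
      = (\<Sum>p\<in>{p. poly P p = 0}. if norm p < r then of_nat (order p P) else 0)"
  proof (rule sum.cong)
    fix p assume p: "p \<in> {p. poly P p = 0}"
    show "winding_number (circlepath 0 r) p * of_int (zorder (poly P) p)
          = (if norm p < r then of_nat (order p P) else 0)"
    proof (cases "norm p < r")
      case True
      then show ?thesis
        using winding_number_circlepath[of p 0 r] by (simp add: zorder_poly[OF assms(1)])
    next
      case False
      then have "norm p > r" using no_root_on_circle p by force
      then have "winding_number (circlepath 0 r) p = 0"
        by (intro winding_number_zero_outside[of _ "cball 0 r"]) (use assms(2) in auto)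
      with False show ?thesis by simp
    qed
  qed simp
  also have "\<dots> = of_nat (\<Sum>p\<in>{p. poly P p = 0 \<and> norm p < r}. order p P)"
    using sum.inter_filter[OF fin, of "\<lambda>p. of_nat (order p P) :: complex" "\<lambda>p. norm p < r"]
    by (simp add: conj_commute)
  also have "(\<Sum>p\<in>{p. poly P p = 0 \<and> norm p < r}. order p P) = size {#x \<in># proots P. norm x < r#}"
    using assms(1) by (simp add: size_multiset_overloaded_eq)
  finally show ?thesis .
qed

lemma size_proots_in_ball_Rouche:
  fixes P Q :: "complex poly" and r :: real
  assumes "r > 0"
    and less: "\<And>z. norm z = r \<Longrightarrow> norm (poly P z - poly Q z) < norm (poly Q z)"
  shows "size {#x \<in># proots P. norm x < r#} = size {#x \<in># proots Q. norm x < r#}"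
proof -
  have circle_nonempty: "norm (of_real r :: complex) = r" using assms(1) by simp
  have P0: "P \<noteq> 0" and Q0: "Q \<noteq> 0"
    using less[OF circle_nonempty] by auto
  have P_circle: "poly P z \<noteq> 0" and Q_circle: "poly Q z \<noteq> 0" if "norm z = r" for z
    using less[OF that] by auto
  have "(\<Sum>p\<in>{p \<in> UNIV. poly Q p + (poly P p - poly Q p) = 0}.
           winding_number (circlepath 0 r) p * of_int (zorder (\<lambda>p. poly Q p + (poly P p - poly Q p)) p))
      = (\<Sum>p\<in>{p \<in> UNIV. poly Q p = 0}. winding_number (circlepath 0 r) p * of_int (zorder (poly Q) p))"
    using poly_roots_finite[OF P0] poly_roots_finite[OF Q0] less assms(1)
    by (intro Rouche_theorem) (auto intro!: holomorphic_intros simp: norm_minus_commute)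
  then have "(\<Sum>p\<in>{p. poly P p = 0}. winding_number (circlepath 0 r) p * of_int (zorder (poly P) p))
      = (\<Sum>p\<in>{p. poly Q p = 0}. winding_number (circlepath 0 r) p * of_int (zorder (poly Q) p))"
    by simp
  then have "(of_nat (size {#x \<in># proots P. norm x < r#}) :: complex) = of_nat (size {#x \<in># proots Q. norm x < r#})"
    by (simp only: sum_winding_number_circlepath_poly[OF P0 assms(1) P_circle]
                   sum_winding_number_circlepath_poly[OF Q0 assms(1) Q_circle])
  then show ?thesis by (simp only: of_nat_eq_iff)
qed

lemma size_proots_in_ball_monom:
  fixes c :: complex
  assumes "c \<noteq> 0" "r > 0"
  shows "size {#x \<in># proots (monom c n). norm x < r#} = n"
  using assms by (simp add: monom_altdef proots_power) (induction n; simp)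

lemma norm_poly_minus_monom_le:
  fixes p :: "'a::real_normed_field poly"
  assumes "j \<le> degree p"
  shows "norm (poly p z - coeff p j * z ^ j) \<le> (\<Sum>k\<in>{..degree p} - {j}. norm (coeff p k) * norm z ^ k)"
proof -
  have "poly p z - coeff p j * z ^ j = (\<Sum>k\<in>{..degree p} - {j}. coeff p k * z ^ k)"
    using assms by (simp add: poly_altdef sum.remove)
  also have "norm \<dots> \<le> (\<Sum>k\<in>{..degree p} - {j}. norm (coeff p k) * norm z ^ k)"
    by (rule order_trans[OF norm_sum]) (simp add: norm_mult norm_power)
  finally show ?thesis .
qed

lemma middle_term_dominates_on_inverse_radius:
  fixes A b :: real and a :: "nat \<Rightarrow> real" and m :: nat
  assumes "A > 0" "m \<ge> 1"
    and "b > 1 + (\<Sum>k = 0..m - 2. \<bar>a k\<bar> * A ^ (m - 1 - k))"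
  shows "A * (1 / A) ^ m + (\<Sum>k = 0..m - 2. \<bar>a k\<bar> * (1 / A) ^ k) < b * (1 / A) ^ (m - 1)"
proof -
  have split: "(1 / A) ^ k = (1 / A) ^ (m - 1) * A ^ (m - 1 - k)" if "k \<le> m - 1" for k
  proof -
    have "(1 / A) ^ (m - 1) = (1 / A) ^ (k + (m - 1 - k))"
      by (simp only: le_add_diff_inverse[OF that])
    also have "\<dots> = (1 / A) ^ k * (1 / A) ^ (m - 1 - k)"
      by (rule power_add)
    finally have "(1 / A) ^ (m - 1) = (1 / A) ^ k * (1 / A) ^ (m - 1 - k)" .
    moreover have "(1 / A) ^ (m - 1 - k) * A ^ (m - 1 - k) = 1"
      using assms(1) by (simp flip: power_mult_distrib)
    ultimately show ?thesis by (simp add: mult.assoc)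
  qed
  have "A * (1 / A) ^ m = (1 / A) ^ (m - 1)"
    using assms by (cases m) auto
  moreover have "(\<Sum>k = 0..m - 2. \<bar>a k\<bar> * (1 / A) ^ k)
      = (1 / A) ^ (m - 1) * (\<Sum>k = 0..m - 2. \<bar>a k\<bar> * A ^ (m - 1 - k))"
    unfolding sum_distrib_left
  proof (rule sum.cong)
    fix k assume "k \<in> {0..m - 2}"
    then show "\<bar>a k\<bar> * (1 / A) ^ k = (1 / A) ^ (m - 1) * (\<bar>a k\<bar> * A ^ (m - 1 - k))"
      using split[of k] by simp
  qed simp
  ultimately have "A * (1 / A) ^ m + (\<Sum>k = 0..m - 2. \<bar>a k\<bar> * (1 / A) ^ k)
      = (1 / A) ^ (m - 1) * (1 + (\<Sum>k = 0..m - 2. \<bar>a k\<bar> * A ^ (m - 1 - k)))"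
    by (simp add: distrib_left)
  also have "\<dots> < (1 / A) ^ (m - 1) * b"
    using assms by (intro mult_strict_left_mono) auto
  finally show ?thesis by (simp add: mult.commute)
qed

lemma size_proots_in_small_disc:
  fixes f :: "int poly" and m :: nat
  assumes "m \<ge> 2" and deg: "degree f = m" and lc: "coeff f m \<noteq> 0"
    and hyp: "\<bar>coeff f (m - 1)\<bar> >
           1 + (\<Sum>k = 0..m - 2. \<bar>coeff f k\<bar> * \<bar>coeff f m\<bar> ^ (m - 1 - k))"
  shows "size {#x \<in># proots (map_poly of_int f :: complex poly). norm x < 1 / of_int \<bar>coeff f m\<bar>#}
           = m - 1"
proof -
  define P where "P = (map_poly of_int f :: complex poly)"
  define A where "A = real_of_int \<bar>coeff f m\<bar>"
  define b where "b = coeff f (m - 1)"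
  define Q where "Q = monom (of_int b :: complex) (m - 1)"
  have A0: "A > 0" using lc by (simp add: A_def)
  have "b \<noteq> 0"
  proof
    assume "b = 0"
    moreover have "(\<Sum>k = 0..m - 2. \<bar>coeff f k\<bar> * \<bar>coeff f m\<bar> ^ (m - 1 - k)) \<ge> 0"
      by (intro sum_nonneg) auto
    ultimately show False using hyp by (simp add: b_def)
  qed
  have hyp_real: "\<bar>real_of_int b\<bar> > 1 + (\<Sum>k = 0..m - 2. \<bar>real_of_int (coeff f k)\<bar> * A ^ (m - 1 - k))"
  proof -
    have "real_of_int (1 + (\<Sum>k = 0..m - 2. \<bar>coeff f k\<bar> * \<bar>coeff f m\<bar> ^ (m - 1 - k)))
          < real_of_int \<bar>b\<bar>"
      using hyp by (simp only: of_int_less_iff b_def)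
    then show ?thesis by (simp add: A_def)
  qed
  have degP: "degree P = m" using deg by (simp add: P_def degree_map_poly)
  have split_indices: "{..m} - {m - 1} = insert m {0..m - 2}" and "m \<notin> {0..m - 2}"
    using assms(1) by auto
  have "size {#x \<in># proots P. norm x < 1 / A#} = size {#x \<in># proots Q. norm x < 1 / A#}"
  proof (rule size_proots_in_ball_Rouche)
    fix z :: complex assume z: "norm z = 1 / A"
    have "norm (poly P z - poly Q z) = norm (poly P z - coeff P (m - 1) * z ^ (m - 1))"
      by (simp add: P_def Q_def b_def poly_monom coeff_map_poly)
    also have "\<dots> \<le> (\<Sum>k\<in>{..m} - {m - 1}. norm (coeff P k) * norm z ^ k)"
      using norm_poly_minus_monom_le[of "m - 1" P z] degP by simp
    also have "\<dots> = A * (1 / A) ^ m + (\<Sum>k = 0..m - 2. \<bar>real_of_int (coeff f k)\<bar> * (1 / A) ^ k)"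
      unfolding split_indices using \<open>m \<notin> {0..m - 2}\<close> by (simp add: z P_def A_def coeff_map_poly)
    also have "\<dots> < \<bar>real_of_int b\<bar> * (1 / A) ^ (m - 1)"
      using middle_term_dominates_on_inverse_radius[OF A0 _ hyp_real] assms(1) by simp
    also have "\<dots> = norm (poly Q z)"
      by (simp add: Q_def poly_monom norm_mult norm_power z)
    finally show "norm (poly P z - poly Q z) < norm (poly Q z)" .
  qed (use A0 in simp)
  also have "\<dots> = m - 1"
    using A0 \<open>b \<noteq> 0\<close> by (simp add: Q_def size_proots_in_ball_monom)
  finally show ?thesis by (simp add: P_def A_def)
qed

lemma norm_prod_mset_less_power:
  fixes f :: "'a \<Rightarrow> 'b::real_normed_field"
  assumes "M \<noteq> {#}" "\<And>x. x \<in># M \<Longrightarrow> norm (f x) < r"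
  shows "norm (\<Prod>x\<in>#M. f x) < r ^ size M"
  using assms
proof (induction M)
  case (add x M)
  have "norm (f x) < r" using add.prems by simp
  show ?case
  proof (cases "M = {#}")
    case False
    then have "norm (\<Prod>x\<in>#M. f x) < r ^ size M" using add by simp
    with \<open>norm (f x) < r\<close> have "norm (f x) * norm (\<Prod>x\<in>#M. f x) < r * r ^ size M"
      by (intro mult_strict_mono') auto
    then show ?thesis by (simp add: norm_mult)
  qed (use \<open>norm (f x) < r\<close> in simp)
qed simp

lemma exists_root_norm_ge_inverse_lead_coeff:
  fixes q :: "int poly"
  assumes "degree q \<ge> 1" "coeff q 0 \<noteq> 0"
  shows "\<exists>x \<in># proots (map_poly of_int q :: complex poly). norm x \<ge> 1 / of_int \<bar>lead_coeff q\<bar>"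
proof (rule ccontr)
  define R where "R = (map_poly of_int q :: complex poly)"
  define A where "A = real_of_int \<bar>lead_coeff q\<bar>"
  assume "\<not> ?thesis"
  then have small: "\<And>x. x \<in># proots R \<Longrightarrow> norm (- x) < 1 / A"
    by (auto simp: R_def A_def not_le)
  have "lead_coeff q \<noteq> 0" using assms(1) by auto
  then have A1: "A \<ge> 1" unfolding A_def by linarith
  have degR: "degree R = degree q" by (simp add: R_def degree_map_poly)
  have lcR: "lead_coeff R = of_int (lead_coeff q)"
    unfolding degR by (simp add: R_def coeff_map_poly)
  have "proots R \<noteq> {#}" using size_proots_complex[of R] degR assms(1) by auto
  then have "norm (\<Prod>x\<in>#proots R. - x) < (1 / A) ^ degree q"
    using norm_prod_mset_less_power[of "proots R" uminus "1 / A"] small size_proots_complex[of R] degR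
    by simp
  also have "\<dots> \<le> 1 / A"
    using power_decreasing[of 1 "degree q" "1 / A"] A1 assms(1) by simp
  finally have prod_small: "norm (\<Prod>x\<in>#proots R. - x) < 1 / A" .
  have "poly R 0 = lead_coeff R * (\<Prod>x\<in>#proots R. - x)"
    by (subst (1) complex_poly_decompose_multiset[symmetric]) (simp add: poly_prod_mset)
  then have "norm (poly R 0) = A * norm (\<Prod>x\<in>#proots R. - x)"
    by (simp add: lcR A_def norm_mult)
  also have "\<dots> < A * (1 / A)"
    using prod_small A1 by (intro mult_strict_left_mono) auto
  finally have "\<bar>real_of_int (coeff q 0)\<bar> < 1"
    using A1 by (simp add: R_def poly_0_coeff_0 coeff_map_poly)
  with assms(2) show False by linarith
qed

lemma degree_pos_if_content_1_not_unit:
  fixes q :: "int poly"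
  assumes "content q = 1" "\<not> is_unit q"
  shows "degree q > 0"
proof (rule ccontr)
  assume "\<not> degree q > 0"
  then obtain c where q: "q = [:c:]" by (metis degree_eq_zeroE gr0I)
  then have "is_unit c" using assms(1) by (simp add: is_unit_normalize)
  with assms(2) q show False by (simp add: is_unit_poly_iff)
qed

lemma map_poly_of_int_mult:
  "map_poly (of_int :: int \<Rightarrow> 'a::comm_ring_1) (p * q) = map_poly of_int p * map_poly of_int q"
  by (rule poly_eqI) (simp add: coeff_mult coeff_map_poly)

lemma irreducible_if_at_most_one_large_root:
  fixes f :: "int poly"
  assumes "content f = 1" "degree f \<ge> 1" "coeff f 0 \<noteq> 0"
    and large_roots: "size {#x \<in># proots (map_poly of_int f :: complex poly).
                               norm x \<ge> 1 / of_int \<bar>lead_coeff f\<bar>#} \<le> 1"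
  shows "irreducible f"
proof (rule irreducibleI)
  show "f \<noteq> 0" and "\<not> is_unit f"
    using assms(2) by (auto simp: is_unit_poly_iff)
  define large where "large x \<longleftrightarrow> norm x \<ge> 1 / of_int \<bar>lead_coeff f\<bar>" for x :: complex
  have has_large_root: "size {#x \<in># proots (map_poly of_int p :: complex poly). large x#} \<ge> 1"
    if "f = p * p'" "\<not> is_unit p" for p p'
  proof -
    have "content p * content p' = 1" using assms(1) by (simp add: that(1) content_mult)
    then have "content p = 1" by (metis dvd_triv_left is_unit_normalize normalize_content)
    then have "degree p \<ge> 1" using degree_pos_if_content_1_not_unit that(2) by fastforce
    moreover have "coeff p 0 \<noteq> 0" using assms(3) by (simp add: that(1) coeff_mult_0)
    ultimately obtain x where x: "x \<in># proots (map_poly of_int p :: complex poly)"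
      and x_large: "norm x \<ge> 1 / of_int \<bar>lead_coeff p\<bar>"
      using exists_root_norm_ge_inverse_lead_coeff by blast
    have "lead_coeff p \<noteq> 0" using \<open>degree p \<ge> 1\<close> by auto
    moreover have "\<bar>lead_coeff p\<bar> \<le> \<bar>lead_coeff f\<bar>"
      using \<open>f \<noteq> 0\<close> by (intro dvd_imp_le_int) (simp_all add: that(1) lead_coeff_mult)
    ultimately have "1 / real_of_int \<bar>lead_coeff f\<bar> \<le> 1 / of_int \<bar>lead_coeff p\<bar>"
      by (intro frac_le) simp_all
    with x_large have "large x" by (simp add: large_def)
    with x have "{#x#} \<subseteq># {#x \<in># proots (map_poly of_int p :: complex poly). large x#}"
      by simp
    from size_mset_mono[OF this] show ?thesis by simp
  qed
  fix g h assume fgh: "f = g * h"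
  show "is_unit g \<or> is_unit h"
  proof (rule ccontr)
    assume "\<not> (is_unit g \<or> is_unit h)"
    then have "size {#x \<in># proots (map_poly of_int g :: complex poly). large x#} \<ge> 1"
      and "size {#x \<in># proots (map_poly of_int h :: complex poly). large x#} \<ge> 1"
      using has_large_root[of g h] has_large_root[of h g] fgh by (auto simp: mult.commute)
    moreover have "proots (map_poly of_int f :: complex poly)
        = proots (map_poly of_int g) + proots (map_poly of_int h)"
      unfolding fgh map_poly_of_int_mult using \<open>f \<noteq> 0\<close> fgh
      by (intro proots_mult) (auto simp: map_poly_eq_0_iff)
    ultimately show False using large_roots unfolding large_def by simp
  qed
qed

theorem theoremB:
  fixes f :: "int poly" and m :: nat
  assumes "m \<ge> 2"
    and "degree f = m"
    and "content f = 1"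
    and "coeff f 0 * coeff f m \<noteq> 0"
    and "\<bar>coeff f (m - 1)\<bar> >
           1 + (\<Sum>k = 0..m - 2. \<bar>coeff f k\<bar> * \<bar>coeff f m\<bar> ^ (m - 1 - k))"
  shows "irreducible f"
proof -
  define P where "P = (map_poly of_int f :: complex poly)"
  define r where "r = 1 / real_of_int \<bar>lead_coeff f\<bar>"
  have "size (proots P) = m"
    using assms(2) by (simp add: P_def size_proots_complex degree_map_poly)
  moreover have "size {#x \<in># proots P. norm x < r#} = m - 1"
    using size_proots_in_small_disc[OF assms(1,2) _ assms(5)] assms(2,4) by (simp add: P_def r_def)
  moreover have "size (proots P) = size {#x \<in># proots P. norm x < r#} + size {#x \<in># proots P. norm x \<ge> r#}"
    by (subst (1) multiset_partition[of "proots P" "\<lambda>x. norm x < r"]) (simp add: not_less)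
  ultimately have "size {#x \<in># proots P. norm x \<ge> r#} \<le> 1" by linarith
  then show ?thesis
    using assms(1-4) by (intro irreducible_if_at_most_one_large_root) (auto simp: P_def r_def)
qed

end
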